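(* Assume the setting described in the context. Suppose $A=\mathbb E[\mathbf P^H\mathbf P]$ is invertible, that $\|\mathbf P\|\le B_P$ almost surely for some constant $B_P<\infty$, and that $\langle \mathbf X\rangle_2<\infty$ and $\langle \mathbf E\rangle_2<\infty$. Then, for fixed $p,q$, $$\mathbb E\|\mu_n-\mu_0\| = O\!\left(\frac{1}{\sqrt n}\right)\quad (n\to\infty).$$ In particular $\mu_n$ is a consistent estimator of $\mu_0$.
   Context: Setting: $\mathbf X$ is a random vector in $\mathbb C^p$ with $\mathbb E[\mathbf X]=\mu_0$ and covariance matrix $\Sigma_0$; $\mathbf P$ is a random $q\times p$ complex matrix; $\mathbf E$ is a random vector in $\mathbb C^q$ with $\mathbb E[\mathbf E]=0$ and covariance $\sigma^2 I_q$ ($\sigma^2$ known); $\mathbf X,\mathbf P,\mathbf E$ are independent and $\mathbf I=\mathbf P\mathbf X+\mathbf E$. Let $(\mathbf X_s,\mathbf P_s,\mathbf E_s)$, $s=1,\dots,n$, be i.i.d. copies of $(\mathbf X,\mathbf P,\mathbf E)$ and $\mathbf I_s=\mathbf P_s\mathbf X_s+\mathbf E_s$; only $(\mathbf I_s,\mathbf P_s)$ are observed. Norms $\|\cdot\|$ are the Euclidean norm on vectors and the operator norm on matrices/operators; $^H$ is conjugate transpose. Define $A_n=\frac1n\sum_{s}P_s^HP_s$, $b_n=\frac1n\sum_s P_s^HI_s$, $A=\mathbb E[\mathbf P^H\mathbf P]$. The estimator is $\mu_n=A_n^{-1}b_n$ if $A_n$ is invertible and $\|A_n^{-1}\|\le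 2\|A^{-1}\|$, and $\mu_n=0$ otherwise. For a random vector $\mathbf Y$, $\langle \mathbf Y\rangle_j=\big(\mathbb E\|\mathbf Y-\mathbb E\mathbf Y\|^j\big)^{1/j}$. *)

theory Defs
  imports "HOL-Probability.Probability" "HOL-Library.Landau_Symbols"
begin

definition cadj :: "complex^'n^'m \<Rightarrow> complex^'m^'n" where
  "cadj M = (\<chi> i j. cnj (M $ j $ i))"

definition opnorm :: "complex^'n^'m \<Rightarrow> real" where
  "opnorm M = onorm (\<lambda>x. M *v x)"

definition A_n :: "(nat \<Rightarrow> 'w \<Rightarrow> complex^'p^'q) \<Rightarrow> nat \<Rightarrow> 'w \<Rightarrow> complex^'p^'p" where
  "A_n Ps n \<omega> = (1 / real n) *\<^sub>R (\<Sum>s<n. cadj (Ps s \<omega>) ** Ps s \<omega>)"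

definition b_n :: "(nat \<Rightarrow> 'w \<Rightarrow> complex^'p^'q) \<Rightarrow> (nat \<Rightarrow> 'w \<Rightarrow> complex^'q) \<Rightarrow> nat \<Rightarrow> 'w \<Rightarrow> complex^'p" where
  "b_n Ps Is n \<omega> = (1 / real n) *\<^sub>R (\<Sum>s<n. cadj (Ps s \<omega>) *v Is s \<omega>)"

definition mu_n :: "complex^'p^'p \<Rightarrow> (nat \<Rightarrow> 'w \<Rightarrow> complex^'p^'q) \<Rightarrow> (nat \<Rightarrow> 'w \<Rightarrow> complex^'q)
                    \<Rightarrow> nat \<Rightarrow> 'w \<Rightarrow> complex^'p" where
  "mu_n A Ps Is n \<omega> =
     (if invertible (A_n Ps n \<omega>) \<and> opnorm (matrix_inv (A_n Ps n \<omega>)) \<le> 2 * opnorm (matrix_inv A)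
      then matrix_inv (A_n Ps n \<omega>) *v b_n Ps Is n \<omega> else 0)"

end

theory Submission
  imports Defs
begin

text \<open>
  Both \<open>b_n - A_n \<mu>0 = (1/n) \<Sum>s P_s\<^sup>H (P_s (X_s - \<mu>0) + E_s)\<close> and
  \<open>A_n - A = (1/n) \<Sum>s (P_s\<^sup>H P_s - A)\<close> are normalised sums of i.i.d. centred vectors
  (centred because \<open>P\<close> is independent of \<open>X\<close> and of \<open>E\<close>), so their squared norms have
  expectation \<open>O(1/n)\<close>. When the guard accepts \<open>A_n\<close>, the error
  \<open>\<mu>_n - \<mu>0 = A_n\<^sup>-\<^sup>1 (b_n - A_n \<mu>0)\<close> is at most \<open>2 \<parallel>A\<^sup>-\<^sup>1\<parallel> \<parallel>b_n - A_n \<mu>0\<parallel>\<close>.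
  By a Neumann-series perturbation argument the guard can only reject when
  \<open>\<parallel>A\<^sup>-\<^sup>1\<parallel> \<parallel>A_n - A\<parallel> > 1/2\<close>, and then \<open>\<parallel>\<mu>0\<parallel>\<close> is bounded by a multiple of
  \<open>\<parallel>A_n - A\<parallel>\<^sup>2\<close>. Taking expectations gives \<open>E \<parallel>\<mu>_n - \<mu>0\<parallel> = O(1/\<surd>n)\<close>, and Markov's
  inequality turns this into consistency.
\<close>

section \<open>Operator norms of complex matrices\<close>

lemma opnorm_matrix_vector_le: "norm (N *v v) \<le> opnorm N * norm v"
  unfolding opnorm_def by (rule onorm) simp

lemma opnorm_nonneg: "0 \<le> opnorm N"
  unfolding opnorm_def by (rule onorm_pos_le) simp

lemma opnorm_le: "(\<And>v. norm (N *v v) \<le> b * norm v) \<Longrightarrow> opnorm N \<le> b"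
  unfolding opnorm_def by (rule onorm_le)

lemma opnorm_triangle: "opnorm (N + L) \<le> opnorm N + opnorm L"
  unfolding opnorm_def matrix_vector_mult_add_rdistrib by (rule onorm_triangle) simp_all

lemma opnorm_minus_commute: "opnorm (N - L) = opnorm (L - N)"
proof -
  have "(\<lambda>v. (N - L) *v v) = (\<lambda>v. - ((L - N) *v v))"
    by (simp add: fun_eq_iff matrix_vector_mult_diff_rdistrib)
  then show ?thesis
    unfolding opnorm_def by (simp add: onorm_neg)
qed

lemma opnorm_matrix_mult_le: "opnorm (N ** L) \<le> opnorm N * opnorm L"
proof (rule opnorm_le)
  fix v
  have "norm ((N ** L) *v v) \<le> opnorm N * norm (L *v v)"
    by (metis matrix_vector_mul_assoc opnorm_matrix_vector_le)
  also have "\<dots> \<le> opnorm N * (opnorm L * norm v)"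
    by (intro mult_left_mono opnorm_matrix_vector_le opnorm_nonneg)
  finally show "norm ((N ** L) *v v) \<le> opnorm N * opnorm L * norm v"
    by (simp add: mult.assoc)
qed

lemma norm_vec_le_sum: "norm (x::'a::real_normed_vector^'n) \<le> (\<Sum>i\<in>UNIV. norm (x$i))"
  by (simp add: norm_vec_def L2_set_le_sum)

lemma norm_matrix_le_entrywise:
  assumes "\<And>i j. norm ((N::'a::real_normed_vector^'n^'m)$i$j) \<le> b"
  shows "norm N \<le> real CARD('m) * real CARD('n) * b"
proof -
  have "norm N \<le> (\<Sum>i\<in>UNIV. \<Sum>j\<in>UNIV. norm (N$i$j))"
    by (intro order_trans[OF norm_vec_le_sum] sum_mono norm_vec_le_sum)
  also have "\<dots> \<le> (\<Sum>i::'m\<in>UNIV. \<Sum>j::'n\<in>UNIV. b)"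
    by (intro sum_mono assms)
  finally show ?thesis by simp
qed

lemma norm_matrix_entry_le: "norm ((N::'a::real_normed_vector^'n^'m)$i$j) \<le> norm N"
  by (meson Finite_Cartesian_Product.norm_nth_le order_trans)

lemma norm_axis: "norm (axis j x) = norm (x::'a::real_normed_vector)"
proof -
  have "(\<lambda>i. (norm (axis j x $ i))\<^sup>2) = (\<lambda>i. if i = j then (norm x)\<^sup>2 else 0)"
    by (auto simp: axis_def)
  then have "(\<Sum>i\<in>UNIV. (norm (axis j x $ i))\<^sup>2) = (norm x)\<^sup>2"
    by (simp only:) simp
  then show ?thesis
    by (simp add: norm_vec_def L2_set_def)
qed

lemma opnorm_le_norm: "opnorm (N::complex^'n^'m) \<le> real CARD('m) * real CARD('n) * norm N"
proof (rule opnorm_le)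
  fix v
  have "norm (N *v v) \<le> (\<Sum>i\<in>UNIV. \<Sum>j\<in>UNIV. norm (N$i$j) * norm (v$j))"
    by (intro order_trans[OF norm_vec_le_sum] sum_mono)
       (simp add: matrix_vector_mult_def norm_mult[symmetric] norm_sum)
  also have "\<dots> \<le> (\<Sum>i::'m\<in>UNIV. \<Sum>j::'n\<in>UNIV. norm N * norm v)"
    by (intro sum_mono mult_mono norm_matrix_entry_le Finite_Cartesian_Product.norm_nth_le) auto
  finally show "norm (N *v v) \<le> real CARD('m) * real CARD('n) * norm N * norm v"
    by simp
qed

lemma norm_le_opnorm: "norm (N::complex^'n^'m) \<le> real CARD('m) * real CARD('n) * opnorm N"
proof (rule norm_matrix_le_entrywise)
  fix i j
  have "N$i$j = (N *v axis j 1)$i"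
    by (simp add: matrix_vector_mult_def axis_def if_distrib cong: if_cong)
  then have "norm (N$i$j) \<le> norm (N *v axis j 1)"
    by (metis Finite_Cartesian_Product.norm_nth_le)
  also have "\<dots> \<le> opnorm N"
    using opnorm_matrix_vector_le[of N "axis j 1"] by (simp add: norm_axis)
  finally show "norm (N$i$j) \<le> opnorm N" .
qed

lemma norm_cadj: "norm (cadj (N::complex^'n^'m)) = norm N"
proof -
  have "(norm (cadj N $ i))\<^sup>2 = (\<Sum>j\<in>UNIV. (norm (N$j$i))\<^sup>2)" for i
    by (simp add: norm_vec_def L2_set_def cadj_def sum_nonneg)
  moreover have "(norm (N $ j))\<^sup>2 = (\<Sum>i\<in>UNIV. (norm (N$j$i))\<^sup>2)" for j
    by (simp add: norm_vec_def L2_set_def sum_nonneg)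
  ultimately have "(\<Sum>i\<in>UNIV. (norm (cadj N $ i))\<^sup>2) = (\<Sum>j\<in>UNIV. (norm (N $ j))\<^sup>2)"
    using sum.swap[of "\<lambda>i j. (norm (N$j$i))\<^sup>2" UNIV UNIV] by simp
  then show ?thesis
    by (simp add: norm_vec_def L2_set_def)
qed

lemma opnorm_cadj_le:
  "opnorm (cadj (N::complex^'n^'m)) \<le> (real CARD('n) * real CARD('m))\<^sup>2 * opnorm N"
proof -
  have "opnorm (cadj N) \<le> real CARD('n) * real CARD('m) * norm N"
    using opnorm_le_norm[of "cadj N"] by (simp add: norm_cadj)
  also have "\<dots> \<le> real CARD('n) * real CARD('m) * (real CARD('m) * real CARD('n) * opnorm N)"
    by (intro mult_left_mono norm_le_opnorm) simp
  finally show ?thesis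
    by (simp add: power2_eq_square mult_ac)
qed

lemma norm_cadj_mult_le:
  "norm (cadj P *v (P *v v + e)) \<le> opnorm (cadj P) * (opnorm P * norm v + norm e)"
proof -
  have "norm (P *v v + e) \<le> opnorm P * norm v + norm e"
    by (intro order_trans[OF norm_triangle_ineq] add_right_mono opnorm_matrix_vector_le)
  then show ?thesis
    by (intro order_trans[OF opnorm_matrix_vector_le] mult_left_mono opnorm_nonneg)
qed

section \<open>Matrix inversion and the guarded solution\<close>

lemma
  assumes "invertible (A::'a::semiring_1^'n^'m)"
  shows matrix_mult_matrix_inv: "A ** matrix_inv A = mat 1"
    and matrix_inv_matrix_mult: "matrix_inv A ** A = mat 1"
proof -
  have "\<exists>A'. A ** A' = mat 1 \<and> A' ** A = mat 1"
    using assms by (simp add: invertible_def)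
  from someI_ex[OF this] show "A ** matrix_inv A = mat 1" "matrix_inv A ** A = mat 1"
    by (simp_all add: matrix_inv_def)
qed

lemma matrix_inv_not_invertible:
  assumes "\<not> invertible (A::'a::semiring_1^'n^'m)"
  shows "matrix_inv A = (SOME A'::'a^'m^'n. False)"
proof -
  have "(\<lambda>A'::'a^'m^'n. A ** A' = mat 1 \<and> A' ** A = mat 1) = (\<lambda>_. False)"
    using assms by (auto simp: invertible_def)
  then show ?thesis
    by (simp add: matrix_inv_def)
qed

lemma matrix_inv_Cramer:
  fixes A :: "'a::field^'n^'n"
  assumes "invertible A"
  shows "matrix_inv A = (\<chi> i j. det (\<chi> r c. if c = i then axis j 1 $ r else A$r$c) / det A)"
proof -
  have "matrix_inv A $ i $ j = det (\<chi> r c. if c = i then axis j 1 $ r else A$r$c) / det A" for i j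
  proof -
    have "A *v (matrix_inv A *v axis j 1) = axis j 1"
      by (simp add: matrix_vector_mul_assoc matrix_mult_matrix_inv[OF assms])
    then have "(matrix_inv A *v axis j 1) $ i
        = det (\<chi> r c. if c = i then axis j 1 $ r else A$r$c) / det A"
      using cramer[of A] assms by (simp add: invertible_det_nz)
    then show ?thesis
      by (simp add: matrix_vector_mult_def axis_def if_distrib cong: if_cong)
  qed
  then show ?thesis
    by (simp add: vec_eq_iff)
qed

lemma invertible_perturbation:
  fixes A M :: "complex^'n^'n"
  assumes A: "invertible A" and small: "opnorm (matrix_inv A) * opnorm (M - A) \<le> 1/2"
  shows "invertible M" and "opnorm (matrix_inv M) \<le> 2 * opnorm (matrix_inv A)"
proof -
  let ?c = "opnorm (matrix_inv A)"
  have bounded_below: "norm v \<le> 2 * ?c * norm (M *v v)" for v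
  proof -
    have "v = matrix_inv A *v (M *v v - (M - A) *v v)"
      by (simp add: matrix_vector_mult_diff_rdistrib matrix_vector_mul_assoc
          matrix_inv_matrix_mult[OF A])
    then have "norm v \<le> ?c * norm (M *v v - (M - A) *v v)"
      by (metis opnorm_matrix_vector_le)
    also have "\<dots> \<le> ?c * (norm (M *v v) + opnorm (M - A) * norm v)"
      by (intro mult_left_mono opnorm_nonneg order_trans[OF norm_triangle_ineq4] add_left_mono
          opnorm_matrix_vector_le)
    also have "\<dots> \<le> ?c * norm (M *v v) + (1/2) * norm v"
      using mult_right_mono[OF small norm_ge_zero[of v]] by (simp add: algebra_simps)
    finally show ?thesis by simp
  qed
  then have "M *v v = 0 \<Longrightarrow> v = 0" for v
    by (metis mult_zero_right norm_le_zero_iff norm_zero)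
  then show M: "invertible M"
    using matrix_left_invertible_ker invertible_left_inverse by blast
  show "opnorm (matrix_inv M) \<le> 2 * ?c"
  proof (rule opnorm_le)
    fix w
    have "M *v (matrix_inv M *v w) = w"
      by (simp add: matrix_vector_mul_assoc matrix_mult_matrix_inv[OF M])
    then show "norm (matrix_inv M *v w) \<le> 2 * ?c * norm w"
      using bounded_below by metis
  qed
qed

definition guarded_solve :: "real \<Rightarrow> complex^'n^'n \<Rightarrow> complex^'n \<Rightarrow> complex^'n" where
  "guarded_solve c M b =
    (if invertible M \<and> opnorm (matrix_inv M) \<le> c then matrix_inv M *v b else 0)"

lemma mu_n_eq_guarded_solve:
  "mu_n A Ps Is n \<omega> = guarded_solve (2 * opnorm (matrix_inv A)) (A_n Ps n \<omega>) (b_n Ps Is n \<omega>)"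
  by (simp add: mu_n_def guarded_solve_def)

text \<open>The first term is the linearisation error; the quadratic term pays for the rejection of a
  badly conditioned \<open>M\<close>, which can only happen when \<open>M\<close> is far from \<open>A\<close>.\<close>
lemma norm_guarded_solve_diff_le:
  fixes A M :: "complex^'n^'n"
  assumes A: "invertible A"
  defines "c \<equiv> opnorm (matrix_inv A)" and "K \<equiv> real CARD('n) * real CARD('n)"
  shows "norm (guarded_solve (2*c) M b - \<mu>)
           \<le> 2*c * norm (b - M *v \<mu>) + 4*c\<^sup>2*K\<^sup>2 * norm \<mu> * (norm (M - A))\<^sup>2"
proof (cases "invertible M \<and> opnorm (matrix_inv M) \<le> 2*c")
  case True
  then have "guarded_solve (2*c) M b - \<mu> = matrix_inv M *v (b - M *v \<mu>)"
    by (simp add: guarded_solve_def matrix_vector_mult_diff_distrib matrix_vector_mul_assoc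
        matrix_inv_matrix_mult)
  then have "norm (guarded_solve (2*c) M b - \<mu>) \<le> opnorm (matrix_inv M) * norm (b - M *v \<mu>)"
    by (simp add: opnorm_matrix_vector_le)
  also have "\<dots> \<le> 2*c * norm (b - M *v \<mu>)"
    using True by (simp add: mult_right_mono)
  finally show ?thesis
    by (simp add: add_increasing2)
next
  case False
  have c: "0 \<le> c"
    by (simp add: c_def opnorm_nonneg)
  have "1/2 < c * opnorm (M - A)"
    using False invertible_perturbation[OF A] by (force simp: c_def)
  also have "\<dots> \<le> c * K * norm (M - A)"
    using mult_left_mono[OF opnorm_le_norm[of "M - A"] c] by (simp add: K_def mult.assoc)
  finally have "1 \<le> 4*c\<^sup>2*K\<^sup>2 * (norm (M - A))\<^sup>2"
    using power_mono[of 1 "2 * (c * K * norm (M - A))" 2] by (simp add: power_mult_distrib)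
  then have "norm \<mu> * 1 \<le> norm \<mu> * (4*c\<^sup>2*K\<^sup>2 * (norm (M - A))\<^sup>2)"
    by (rule mult_left_mono) simp
  then have "norm \<mu> \<le> 4*c\<^sup>2*K\<^sup>2 * norm \<mu> * (norm (M - A))\<^sup>2"
    by (simp add: mult_ac)
  moreover have "guarded_solve (2*c) M b = 0"
    using False unfolding guarded_solve_def by auto
  ultimately show ?thesis
    using c by (simp add: add_increasing)
qed

section \<open>Measurability\<close>

lemma borel_measurable_vec_nth[measurable (raw)]:
  assumes [measurable]: "f \<in> borel_measurable N"
  shows "(\<lambda>x. (f x :: 'a::real_normed_vector^'n) $ i) \<in> borel_measurable N"
  using borel_measurable_continuous_on[OF continuous_on_component[OF continuous_on_id] assms]
  by simp

lemma borel_measurable_vec_lambda[measurable (raw)]: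
  fixes f :: "'a \<Rightarrow> 'n::finite \<Rightarrow> 'b::euclidean_space"
  assumes "\<And>i. (\<lambda>x. f x i) \<in> borel_measurable M"
  shows "(\<lambda>x. \<chi> i. f x i) \<in> borel_measurable M"
  unfolding borel_measurable_euclidean_space[where f="\<lambda>x. \<chi> i. f x i"]
  using assms by (auto simp: Basis_vec_def inner_axis)

lemma borel_measurable_det[measurable]: "(det :: complex^'n^'n \<Rightarrow> complex) \<in> borel_measurable borel"
  unfolding det_def by measurable

lemma borel_measurable_matrix_inv[measurable]:
  "(matrix_inv :: complex^'n^'n \<Rightarrow> _) \<in> borel_measurable borel"
proof -
  \<comment> \<open>Cramer's rule on \<open>det A \<noteq> 0\<close>; elsewhere \<open>matrix_inv\<close> is a constant junk value.\<close>
  have "matrix_inv = (\<lambda>A::complex^'n^'n. if det A = 0 then (SOME A'. False)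
          else \<chi> i j. det (\<chi> r c. if c = i then axis j 1 $ r else A$r$c) / det A)"
    by (auto simp: fun_eq_iff matrix_inv_Cramer matrix_inv_not_invertible invertible_det_nz)
  also have "\<dots> \<in> borel_measurable borel"
    unfolding axis_def by measurable
  finally show ?thesis .
qed

lemma continuous_on_opnorm: "continuous_on UNIV (opnorm :: complex^'n^'m \<Rightarrow> real)"
proof (rule lipschitz_on_continuous_on)
  show "(real CARD('m) * real CARD('n))-lipschitz_on UNIV (opnorm :: complex^'n^'m \<Rightarrow> real)"
  proof (rule lipschitz_onI)
    fix M N :: "complex^'n^'m"
    have "\<bar>opnorm M - opnorm N\<bar> \<le> opnorm (M - N)"
      using opnorm_triangle[of "M - N" N] opnorm_triangle[of "N - M" M] opnorm_minus_commute[of M N]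
      by simp
    also have "\<dots> \<le> real CARD('m) * real CARD('n) * norm (M - N)"
      by (rule opnorm_le_norm)
    finally show "dist (opnorm M) (opnorm N) \<le> real CARD('m) * real CARD('n) * dist M N"
      by (simp add: dist_real_def dist_norm)
  qed simp
qed

lemma borel_measurable_opnorm[measurable]:
  "(opnorm :: complex^'n^'m \<Rightarrow> real) \<in> borel_measurable borel"
  by (rule borel_measurable_continuous_onI[OF continuous_on_opnorm])

lemma borel_measurable_matrix_vector_mult[measurable (raw)]:
  fixes f :: "'a \<Rightarrow> complex^'n^'m" and g :: "'a \<Rightarrow> complex^'n"
  assumes [measurable]: "f \<in> borel_measurable N" "g \<in> borel_measurable N"
  shows "(\<lambda>x. f x *v g x) \<in> borel_measurable N"
  unfolding matrix_vector_mult_def by measurable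

lemma borel_measurable_matrix_matrix_mult[measurable (raw)]:
  fixes f :: "'a \<Rightarrow> complex^'n^'m" and g :: "'a \<Rightarrow> complex^'k^'n"
  assumes [measurable]: "f \<in> borel_measurable N" "g \<in> borel_measurable N"
  shows "(\<lambda>x. f x ** g x) \<in> borel_measurable N"
  unfolding matrix_matrix_mult_def by measurable

lemma borel_measurable_cnj[measurable]: "cnj \<in> borel_measurable borel"
  by (intro borel_measurable_continuous_onI continuous_intros)

lemma borel_measurable_cadj[measurable (raw)]:
  assumes [measurable]: "f \<in> borel_measurable N"
  shows "(\<lambda>x. cadj (f x :: complex^'n^'m)) \<in> borel_measurable N"
  unfolding cadj_def by measurable

lemma borel_measurable_guarded_solve[measurable (raw)]:
  fixes f :: "'a \<Rightarrow> complex^'n^'n" and g :: "'a \<Rightarrow> complex^'n"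
  assumes [measurable]: "f \<in> borel_measurable N" "g \<in> borel_measurable N"
  shows "(\<lambda>x. guarded_solve c (f x) (g x)) \<in> borel_measurable N"
  unfolding guarded_solve_def invertible_det_nz by measurable

section \<open>Independence and second moments\<close>

lemma
  fixes h :: "'b::topological_space \<Rightarrow> 'c::{banach, second_countable_topology}"
  assumes distr_eq: "distr M borel X = distr M borel Y"
    and [measurable]: "X \<in> borel_measurable M" "Y \<in> borel_measurable M" "h \<in> borel_measurable borel"
  shows integrable_comp_distr_eq: "integrable M (\<lambda>\<omega>. h (X \<omega>)) \<longleftrightarrow> integrable M (\<lambda>\<omega>. h (Y \<omega>))"
    and integral_comp_distr_eq: "(\<integral>\<omega>. h (X \<omega>) \<partial>M) = (\<integral>\<omega>. h (Y \<omega>) \<partial>M)"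
  by (metis distr_eq integrable_distr_eq integral_distr assms(2-4))+

text \<open>The library's \<open>indep_var\<close> requires both random variables to take values in the same type.\<close>
definition indep_rv ::
    "'a measure \<Rightarrow> ('a \<Rightarrow> 'b::topological_space) \<Rightarrow> ('a \<Rightarrow> 'c::topological_space) \<Rightarrow> bool"
  where "indep_rv M X Y \<longleftrightarrow> (\<forall>A \<in> sets borel. \<forall>B \<in> sets borel.
    measure M {\<omega> \<in> space M. X \<omega> \<in> A \<and> Y \<omega> \<in> B}
      = measure M {\<omega> \<in> space M. X \<omega> \<in> A} * measure M {\<omega> \<in> space M. Y \<omega> \<in> B})"

lemma indep_rv_comp:
  fixes X :: "'a \<Rightarrow> 'b::topological_space" and Y :: "'a \<Rightarrow> 'c::topological_space"
    and f :: "'b \<Rightarrow> 'd::topological_space" and g :: "'c \<Rightarrow> 'e::topological_space"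
  assumes "indep_rv M X Y" "f \<in> borel_measurable borel" "g \<in> borel_measurable borel"
  shows "indep_rv M (\<lambda>\<omega>. f (X \<omega>)) (\<lambda>\<omega>. g (Y \<omega>))"
  unfolding indep_rv_def
proof (intro ballI)
  fix A :: "'d set" and B :: "'e set" assume "A \<in> sets borel" "B \<in> sets borel"
  then have "f -` A \<in> sets borel" "g -` B \<in> sets borel"
    using measurable_sets[OF assms(2)] measurable_sets[OF assms(3)] by auto
  then have "measure M {\<omega> \<in> space M. X \<omega> \<in> f -` A \<and> Y \<omega> \<in> g -` B}
      = measure M {\<omega> \<in> space M. X \<omega> \<in> f -` A} * measure M {\<omega> \<in> space M. Y \<omega> \<in> g -` B}"
    using assms(1) unfolding indep_rv_def by blast
  then show "measure M {\<omega> \<in> space M. f (X \<omega>) \<in> A \<and> g (Y \<omega>) \<in> B}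
      = measure M {\<omega> \<in> space M. f (X \<omega>) \<in> A} * measure M {\<omega> \<in> space M. g (Y \<omega>) \<in> B}"
    by simp
qed

lemma (in prob_space) indep_var_if_indep_rv:
  fixes X Y :: "'a \<Rightarrow> 'b::topological_space"
  assumes X: "X \<in> borel_measurable M" and Y: "Y \<in> borel_measurable M" and indep: "indep_rv M X Y"
  shows "indep_var borel X borel Y"
proof -
  have Int_stable: "Int_stable {Z -` A \<inter> space M |A. A \<in> sets (borel :: 'b measure)}" for Z
  proof (safe intro!: Int_stableI)
    fix A B :: "'b set" assume "A \<in> sets borel" "B \<in> sets borel"
    then show "\<exists>C. (Z -` A \<inter> space M) \<inter> (Z -` B \<inter> space M) = Z -` C \<inter> space M \<and> C \<in> sets borel"
      by (intro exI[of _ "A \<inter> B"]) auto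
  qed
  have preimage: "Z -` A \<inter> space M = {\<omega> \<in> space M. Z \<omega> \<in> A}" for Z :: "'a \<Rightarrow> 'b" and A
    by auto
  show ?thesis
    unfolding indep_var_eq
  proof (intro conjI indep_set_sigma_sets Int_stable X Y indep_setI)
    show "{X -` A \<inter> space M |A. A \<in> sets borel} \<subseteq> events"
      using X by (auto intro: measurable_sets)
    show "{Y -` A \<inter> space M |A. A \<in> sets borel} \<subseteq> events"
      using Y by (auto intro: measurable_sets)
    fix a b
    assume "a \<in> {X -` A \<inter> space M |A. A \<in> sets borel}" "b \<in> {Y -` A \<inter> space M |A. A \<in> sets borel}"
    then obtain A B where "a = {\<omega> \<in> space M. X \<omega> \<in> A}" "b = {\<omega> \<in> space M. Y \<omega> \<in> B}"
      "A \<in> sets borel" "B \<in> sets borel"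
      unfolding preimage by blast
    moreover have "{\<omega> \<in> space M. X \<omega> \<in> A} \<inter> {\<omega> \<in> space M. Y \<omega> \<in> B}
        = {\<omega> \<in> space M. X \<omega> \<in> A \<and> Y \<omega> \<in> B}" for A B
      by auto
    ultimately show "prob (a \<inter> b) = prob a * prob b"
      using indep by (simp add: indep_rv_def)
  qed
qed

lemma bounded_linear_axis: "bounded_linear (axis i :: 'a::real_normed_vector \<Rightarrow> 'a^'n)"
  by (rule bounded_linear_intro[where K=1])
    (simp_all add: norm_axis, simp_all add: axis_def vec_eq_iff)

lemma matrix_vector_mult_eq_sum_axis:
  "F *v (v::'a::semiring_1^'n) = (\<Sum>i\<in>UNIV. \<Sum>j\<in>UNIV. axis i (F$i$j * v$j))"
  by (simp add: vec_eq_iff matrix_vector_mult_def sum_component axis_def if_distrib cong: if_cong)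
    (simp add: sum.swap[of _ UNIV])

lemma (in prob_space)
  fixes F :: "'a \<Rightarrow> complex^'n^'m" and G :: "'a \<Rightarrow> complex^'n"
  assumes [measurable]: "F \<in> borel_measurable M" "G \<in> borel_measurable M"
    and indep: "indep_rv M F G" and F: "integrable M F" and G: "integrable M G"
  shows integrable_matrix_vector_mult_indep: "integrable M (\<lambda>\<omega>. F \<omega> *v G \<omega>)"
    and integral_matrix_vector_mult_indep:
      "expectation (\<lambda>\<omega>. F \<omega> *v G \<omega>) = expectation F *v expectation G"
proof -
  note nth_integrable = integrable_bounded_linear[OF bounded_linear_vec_nth]
  note nth_integral = integral_bounded_linear[OF bounded_linear_vec_nth]
  have row_integrable: "integrable M (\<lambda>\<omega>. F \<omega> $ i)" for i
    using nth_integrable[OF F] by simp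
  have entry_integrable: "integrable M (\<lambda>\<omega>. F \<omega> $ i $ j)" "integrable M (\<lambda>\<omega>. G \<omega> $ j)"
    for i j
    using nth_integrable[OF row_integrable] nth_integrable[OF G] by simp_all
  have entry_integral: "expectation (\<lambda>\<omega>. F \<omega> $ i $ j) = expectation F $ i $ j"
    "expectation (\<lambda>\<omega>. G \<omega> $ j) = expectation G $ j" for i j
    using nth_integral[OF row_integrable] nth_integral[OF F] nth_integral[OF G] by simp_all
  have entry_indep: "indep_var borel (\<lambda>\<omega>. F \<omega> $ i $ j) borel (\<lambda>\<omega>. G \<omega> $ j)" for i j
    by (intro indep_var_if_indep_rv indep_rv_comp[OF indep]) measurable
  note product = indep_var_integrable[OF entry_indep entry_integrable]
    indep_var_lebesgue_integral[OF entry_indep entry_integrable]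
  show "integrable M (\<lambda>\<omega>. F \<omega> *v G \<omega>)"
    unfolding matrix_vector_mult_eq_sum_axis
    by (intro Bochner_Integration.integrable_sum integrable_bounded_linear[OF bounded_linear_axis]
        product)
  show "expectation (\<lambda>\<omega>. F \<omega> *v G \<omega>) = expectation F *v expectation G"
    unfolding matrix_vector_mult_eq_sum_axis
    by (simp add: Bochner_Integration.integrable_sum integral_bounded_linear[OF bounded_linear_axis]
        integrable_bounded_linear[OF bounded_linear_axis] product entry_integral)
qed

lemma (in prob_space) integrable_if_norm_square_integrable:
  fixes f :: "'a \<Rightarrow> 'b::{banach, second_countable_topology}"
  assumes "f \<in> borel_measurable M" "integrable M (\<lambda>\<omega>. (norm (f \<omega>))\<^sup>2)"
  shows "integrable M f"
  using square_integrable_imp_integrable[of "\<lambda>\<omega>. norm (f \<omega>)"] assms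
  by (simp add: integrable_norm_iff)

lemma (in prob_space)
  fixes Y :: "nat \<Rightarrow> 'a \<Rightarrow> real"
  assumes indep: "indep_vars (\<lambda>_. borel) Y UNIV"
    and square_integrable: "\<And>s. integrable M (\<lambda>\<omega>. (Y s \<omega>)\<^sup>2)"
    and mean_zero: "\<And>s. expectation (Y s) = 0"
  shows integrable_sum_square_indep: "integrable M (\<lambda>\<omega>. (\<Sum>s<n. Y s \<omega>)\<^sup>2)"
    and expectation_sum_square_indep:
      "expectation (\<lambda>\<omega>. (\<Sum>s<n. Y s \<omega>)\<^sup>2) = (\<Sum>s<n. expectation (\<lambda>\<omega>. (Y s \<omega>)\<^sup>2))"
proof -
  have [measurable]: "Y s \<in> borel_measurable M" for s
    using indep by (simp add: indep_vars_def)
  have integrable: "integrable M (Y s)" for s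
    by (rule square_integrable_imp_integrable) (simp_all add: square_integrable)
  have products: "integrable M (\<lambda>\<omega>. Y s \<omega> * Y t \<omega>) \<and>
      expectation (\<lambda>\<omega>. Y s \<omega> * Y t \<omega>) = (if s = t then expectation (\<lambda>\<omega>. (Y s \<omega>)\<^sup>2) else 0)"
    for s t
  proof (cases "s = t")
    case True
    then show ?thesis
      using square_integrable[of s] by (simp add: power2_eq_square)
  next
    case False
    have "indep_vars (\<lambda>_. borel) Y {s, t}"
      by (rule indep_vars_subset[OF indep]) auto
    then have "integrable M (\<lambda>\<omega>. \<Prod>i\<in>{s,t}. Y i \<omega>)"
      "expectation (\<lambda>\<omega>. \<Prod>i\<in>{s,t}. Y i \<omega>) = (\<Prod>i\<in>{s,t}. expectation (Y i))"
      by (auto intro: indep_vars_integrable indep_vars_lebesgue_integral integrable)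
    then show ?thesis
      using False mean_zero by simp
  qed
  then have product_integrable: "integrable M (\<lambda>\<omega>. Y s \<omega> * Y t \<omega>)"
    and product_expectation: "expectation (\<lambda>\<omega>. Y s \<omega> * Y t \<omega>)
      = (if s = t then expectation (\<lambda>\<omega>. (Y s \<omega>)\<^sup>2) else 0)" for s t
    by blast+
  have square_sum: "(\<Sum>s<n. Y s \<omega>)\<^sup>2 = (\<Sum>s<n. \<Sum>t<n. Y s \<omega> * Y t \<omega>)" for \<omega>
    by (simp add: power2_eq_square sum_product)
  show "integrable M (\<lambda>\<omega>. (\<Sum>s<n. Y s \<omega>)\<^sup>2)"
    unfolding square_sum by (intro Bochner_Integration.integrable_sum product_integrable)
  show "expectation (\<lambda>\<omega>. (\<Sum>s<n. Y s \<omega>)\<^sup>2) = (\<Sum>s<n. expectation (\<lambda>\<omega>. (Y s \<omega>)\<^sup>2))"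
    unfolding square_sum
    by (simp add: Bochner_Integration.integral_sum Bochner_Integration.integrable_sum
        product_integrable product_expectation)
qed

lemma (in prob_space)
  fixes Z :: "nat \<Rightarrow> 'a \<Rightarrow> 'b::euclidean_space"
  assumes indep: "indep_vars (\<lambda>_. borel) Z UNIV"
    and square_integrable: "\<And>s. integrable M (\<lambda>\<omega>. (norm (Z s \<omega>))\<^sup>2)"
    and mean_zero: "\<And>s. expectation (Z s) = 0"
  shows integrable_norm_sum_square_indep: "integrable M (\<lambda>\<omega>. (norm (\<Sum>s<n. Z s \<omega>))\<^sup>2)"
    and expectation_norm_sum_square_indep:
      "expectation (\<lambda>\<omega>. (norm (\<Sum>s<n. Z s \<omega>))\<^sup>2) = (\<Sum>s<n. expectation (\<lambda>\<omega>. (norm (Z s \<omega>))\<^sup>2))"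
proof -
  have [measurable]: "Z s \<in> borel_measurable M" for s
    using indep by (simp add: indep_vars_def)
  have integrable: "integrable M (Z s)" for s
    by (rule integrable_if_norm_square_integrable) (simp_all add: square_integrable)
  have norm_square: "(norm z)\<^sup>2 = (\<Sum>b\<in>Basis. (z \<bullet> b)\<^sup>2)" for z :: 'b
    by (subst power2_norm_eq_inner, subst euclidean_inner) (simp add: power2_eq_square)
  have component_square_integrable: "integrable M (\<lambda>\<omega>. (Z s \<omega> \<bullet> b)\<^sup>2)" if "b \<in> Basis" for s b
  proof (rule Bochner_Integration.integrable_bound[OF square_integrable[of s]])
    show "AE \<omega> in M. norm ((Z s \<omega> \<bullet> b)\<^sup>2) \<le> norm ((norm (Z s \<omega>))\<^sup>2)"
      using Basis_le_norm[OF that]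
      by (intro AE_I2) (metis abs_le_square_iff abs_norm_cancel real_norm_def norm_power)
  qed measurable
  have component_indep: "indep_vars (\<lambda>_. borel) (\<lambda>s \<omega>. Z s \<omega> \<bullet> b) UNIV" for b
    by (rule indep_vars_compose2[OF indep]) measurable
  have component_mean_zero: "expectation (\<lambda>\<omega>. Z s \<omega> \<bullet> b) = 0" for s b
    using integrable mean_zero by simp
  note components = integrable_sum_square_indep[OF component_indep component_square_integrable
      component_mean_zero]
    expectation_sum_square_indep[OF component_indep component_square_integrable component_mean_zero]
  show "integrable M (\<lambda>\<omega>. (norm (\<Sum>s<n. Z s \<omega>))\<^sup>2)"
    unfolding norm_square inner_sum_left by (intro Bochner_Integration.integrable_sum components)
  show "expectation (\<lambda>\<omega>. (norm (\<Sum>s<n. Z s \<omega>))\<^sup>2) = (\<Sum>s<n. expectation (\<lambda>\<omega>. (norm (Z s \<omega>))\<^sup>2))"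
    unfolding norm_square inner_sum_left
    by (simp add: Bochner_Integration.integral_sum Bochner_Integration.integrable_sum components
        component_square_integrable sum.swap[of _ "{..<n}"])
qed

lemma (in prob_space)
  assumes "\<And>A B C. A \<in> sets borel \<Longrightarrow> B \<in> sets borel \<Longrightarrow> C \<in> sets borel \<Longrightarrow>
    prob {\<omega> \<in> space M. X \<omega> \<in> A \<and> Y \<omega> \<in> B \<and> Z \<omega> \<in> C}
      = prob {\<omega> \<in> space M. X \<omega> \<in> A} * prob {\<omega> \<in> space M. Y \<omega> \<in> B} * prob {\<omega> \<in> space M. Z \<omega> \<in> C}"
  shows indep_rv_of_product3: "indep_rv M Y X" "indep_rv M Y Z"
proof -
  have "{\<omega> \<in> space M. W \<omega> \<in> UNIV} = space M" for W :: "'a \<Rightarrow> 'd"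
    by auto
  then show "indep_rv M Y X" "indep_rv M Y Z"
    unfolding indep_rv_def
    using assms[of _ _ UNIV] assms[of UNIV] by (auto simp: prob_space conj_commute)
qed

lemma (in prob_space) prob_greater_tendsto_zero:
  fixes U :: "nat \<Rightarrow> 'a \<Rightarrow> real"
  assumes integrable: "\<And>n. integrable M (U n)" and nonneg: "\<And>n \<omega>. 0 \<le> U n \<omega>"
    and expectation: "(\<lambda>n. expectation (U n)) \<longlonglongrightarrow> 0" and "0 < \<epsilon>"
  shows "(\<lambda>n. prob {\<omega> \<in> space M. \<epsilon> < U n \<omega>}) \<longlonglongrightarrow> 0"
proof (rule tendsto_sandwich[OF _ _ tendsto_const])
  have "prob {\<omega> \<in> space M. \<epsilon> < U n \<omega>} \<le> expectation (U n) / \<epsilon>" for n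
  proof -
    have [measurable]: "U n \<in> borel_measurable M"
      using integrable by blast
    have "prob {\<omega> \<in> space M. \<epsilon> < U n \<omega>} \<le> prob {\<omega> \<in> space M. \<epsilon> \<le> U n \<omega>}"
      by (intro finite_measure_mono) auto
    also have "\<dots> \<le> expectation (U n) / \<epsilon>"
      using integral_Markov_inequality_measure[OF integrable sets.top _ \<open>0 < \<epsilon>\<close>] nonneg by simp
    finally show ?thesis .
  qed
  then show "\<forall>\<^sub>F n in sequentially. prob {\<omega> \<in> space M. \<epsilon> < U n \<omega>} \<le> expectation (U n) / \<epsilon>"
    by simp
  show "(\<lambda>n. expectation (U n) / \<epsilon>) \<longlonglongrightarrow> 0"
    using tendsto_divide_zero[OF expectation] .
qed simp

section \<open>Empirical moments and rates\<close>

lemma scaleR_matrix_vector_assoc: "(r *\<^sub>R (N::'a::real_algebra_1^'n^'m)) *v v = r *\<^sub>R (N *v v)"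
  by (simp add: matrix_vector_mult_def vec_eq_iff scaleR_sum_right mult_scaleR_left)

lemma sum_matrix_vector_mult: "(\<Sum>s\<in>S. N s) *v v = (\<Sum>s\<in>S. N s *v v)"
  by (induct S rule: infinite_finite_induct) (simp_all add: matrix_vector_mult_add_rdistrib)

lemma A_n_diff:
  assumes "0 < n"
  shows "A_n Ps n \<omega> - A = (1 / real n) *\<^sub>R (\<Sum>s<n. cadj (Ps s \<omega>) ** Ps s \<omega> - A)"
  using assms
  by (simp add: A_n_def sum_subtractf scaleR_diff_right sum_constant_scaleR del: sum_constant)

lemma b_n_diff:
  "b_n Ps (\<lambda>s \<omega>. Ps s \<omega> *v Xs s \<omega> + Es s \<omega>) n \<omega> - A_n Ps n \<omega> *v \<mu>
     = (1 / real n) *\<^sub>R (\<Sum>s<n. cadj (Ps s \<omega>) *v (Ps s \<omega> *v (Xs s \<omega> - \<mu>) + Es s \<omega>))"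
proof -
  have "cadj (Ps s \<omega>) *v (Ps s \<omega> *v (Xs s \<omega> - \<mu>) + Es s \<omega>)
      = cadj (Ps s \<omega>) *v (Ps s \<omega> *v Xs s \<omega> + Es s \<omega>) - (cadj (Ps s \<omega>) ** Ps s \<omega>) *v \<mu>" for s
    by (simp add: matrix_vector_mult_diff_distrib matrix_vector_right_distrib
        matrix_vector_mul_assoc)
  then show ?thesis
    by (simp add: A_n_def b_n_def scaleR_matrix_vector_assoc sum_matrix_vector_mult sum_subtractf
        scaleR_diff_right)
qed

lemma double_div_le_inverse_sqrt:
  fixes n x :: real
  assumes "0 < n"
  shows "2 * x / n \<le> 1 / sqrt n + x\<^sup>2 / (n * sqrt n)"
proof -
  define r where "r = sqrt n"
  have "0 < r" "n = r\<^sup>2"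
    using assms by (simp_all add: r_def)
  moreover have "2 * x * r \<le> r\<^sup>2 + x\<^sup>2"
    using zero_le_power2[of "r - x"] by (simp add: power2_eq_square algebra_simps)
  ultimately show ?thesis
    unfolding r_def[symmetric] by (simp add: field_simps power2_eq_square)
qed

lemma
  fixes f :: "nat \<Rightarrow> real"
  assumes "\<And>n. 0 < n \<Longrightarrow> \<bar>f n\<bar> \<le> C / sqrt n"
  shows bigo_inverse_sqrt_if_le: "f \<in> O(\<lambda>n. 1 / sqrt (real n))"
    and tendsto_zero_if_le_inverse_sqrt: "f \<longlonglongrightarrow> 0"
proof -
  have bound: "\<forall>\<^sub>F n in sequentially. norm (f n) \<le> C / sqrt n"
    using assms by (intro eventually_sequentiallyI[of 1]) simp
  then show "f \<in> O(\<lambda>n. 1 / sqrt (real n))"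
    by (intro bigoI[of _ C]) simp
  show "f \<longlonglongrightarrow> 0"
    by (rule Lim_null_comparison[OF bound])
      (intro tendsto_divide_0[OF tendsto_const] filterlim_at_top_imp_at_infinity
        filterlim_compose[OF sqrt_at_top filterlim_real_sequentially])
qed

section \<open>The linear measurement model\<close>

type_synonym ('p, 'q) observation = "(complex^'p) \<times> (complex^'p^'q) \<times> (complex^'q)"

locale linear_inverse_model = prob_space M
  for M :: "'w measure"
    and Xs :: "nat \<Rightarrow> 'w \<Rightarrow> complex^'p"
    and Ps :: "nat \<Rightarrow> 'w \<Rightarrow> complex^'p^'q"
    and Es :: "nat \<Rightarrow> 'w \<Rightarrow> complex^'q"
    and \<mu>0 :: "complex^'p" and BP :: real +
  assumes measurable_X [measurable]: "\<And>s. Xs s \<in> borel_measurable M"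
    and measurable_P [measurable]: "\<And>s. Ps s \<in> borel_measurable M"
    and measurable_E [measurable]: "\<And>s. Es s \<in> borel_measurable M"
    and indep_samples: "indep_vars (\<lambda>_. borel) (\<lambda>s \<omega>. (Xs s \<omega>, Ps s \<omega>, Es s \<omega>)) UNIV"
    and ident_distr_samples: "\<And>s. distr M borel (\<lambda>\<omega>. (Xs s \<omega>, Ps s \<omega>, Es s \<omega>))
                                = distr M borel (\<lambda>\<omega>. (Xs 0 \<omega>, Ps 0 \<omega>, Es 0 \<omega>))"
    and indep_P_X: "indep_rv M (Ps 0) (Xs 0)"
    and indep_P_E: "indep_rv M (Ps 0) (Es 0)"
    and X_mean: "expectation (Xs 0) = \<mu>0"
    and X_square_integrable: "integrable M (\<lambda>\<omega>. (norm (Xs 0 \<omega> - \<mu>0))\<^sup>2)"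
    and E_mean: "expectation (Es 0) = 0"
    and E_square_integrable: "integrable M (\<lambda>\<omega>. (norm (Es 0 \<omega>))\<^sup>2)"
    and P_bounded: "AE \<omega> in M. opnorm (Ps 0 \<omega>) \<le> BP"
    and A_invertible: "invertible (expectation (\<lambda>\<omega>. cadj (Ps 0 \<omega>) ** Ps 0 \<omega>))"
begin

abbreviation "A \<equiv> expectation (\<lambda>\<omega>. cadj (Ps 0 \<omega>) ** Ps 0 \<omega>)"

abbreviation "sample s \<omega> \<equiv> (Xs s \<omega>, Ps s \<omega>, Es s \<omega>)"

abbreviation "estimator \<equiv> mu_n A Ps (\<lambda>s \<omega>. Ps s \<omega> *v Xs s \<omega> + Es s \<omega>)"

definition gram_deviation :: "('p, 'q) observation \<Rightarrow> complex^'p^'p" where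
  "gram_deviation = (\<lambda>(x, P, e). cadj P ** P - A)"

definition score :: "('p, 'q) observation \<Rightarrow> complex^'p" where
  "score = (\<lambda>(x, P, e). cadj P *v (P *v (x - \<mu>0) + e))"

lemma measurable_gram_deviation [measurable]: "gram_deviation \<in> borel_measurable borel"
  unfolding gram_deviation_def split_def cadj_def matrix_matrix_mult_def
  by (intro borel_measurable_continuous_onI continuous_intros)

lemma measurable_score [measurable]: "score \<in> borel_measurable borel"
  unfolding score_def split_def cadj_def matrix_vector_mult_def
  by (intro borel_measurable_continuous_onI continuous_intros)

lemma P_opnorm_bounded: "\<exists>C \<ge> 0. AE \<omega> in M. opnorm (Ps 0 \<omega>) \<le> C \<and> opnorm (cadj (Ps 0 \<omega>)) \<le> C"
proof (intro exI conjI)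
  let ?K = "(real CARD('p) * real CARD('q))\<^sup>2"
  have "1 \<le> real CARD('p)" "1 \<le> real CARD('q)"
    by (simp_all add: Suc_le_eq)
  then have K: "1 \<le> ?K"
    by (intro one_le_power) (metis mult_mono mult_1 zero_le_one order_trans)
  show "AE \<omega> in M. opnorm (Ps 0 \<omega>) \<le> ?K * max BP 0 \<and> opnorm (cadj (Ps 0 \<omega>)) \<le> ?K * max BP 0"
    using P_bounded
  proof eventually_elim
    case (elim \<omega>)
    have "opnorm (cadj (Ps 0 \<omega>)) \<le> ?K * opnorm (Ps 0 \<omega>)"
      by (rule opnorm_cadj_le)
    also have "\<dots> \<le> ?K * max BP 0"
      using elim by (intro mult_left_mono) auto
    finally show ?case
      using elim mult_right_mono[OF K, of "max BP 0"] by auto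
  qed
qed simp

lemma integrable_X: "integrable M (Xs 0)"
proof -
  have "integrable M (\<lambda>\<omega>. Xs 0 \<omega> - \<mu>0)"
    by (rule integrable_if_norm_square_integrable[OF _ X_square_integrable]) simp
  from Bochner_Integration.integrable_add[OF this integrable_const[of \<mu>0]] show ?thesis
    by simp
qed

lemma integrable_E: "integrable M (Es 0)"
  by (rule integrable_if_norm_square_integrable) (simp_all add: E_square_integrable)

lemma integrable_cadj_P: "integrable M (\<lambda>\<omega>. cadj (Ps 0 \<omega>))"
proof -
  obtain C where C: "AE \<omega> in M. opnorm (Ps 0 \<omega>) \<le> C \<and> opnorm (cadj (Ps 0 \<omega>)) \<le> C"
    using P_opnorm_bounded by blast
  have "AE \<omega> in M. norm (cadj (Ps 0 \<omega>)) \<le> real CARD('p) * real CARD('q) * C"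
    using C by eventually_elim (auto intro: order_trans[OF norm_le_opnorm] mult_left_mono)
  then show ?thesis
    by (rule integrable_const_bound) simp
qed

lemma gram_bounded: "\<exists>B. AE \<omega> in M. norm (cadj (Ps 0 \<omega>) ** Ps 0 \<omega>) \<le> B"
proof -
  obtain C where "0 \<le> C" and C: "AE \<omega> in M. opnorm (Ps 0 \<omega>) \<le> C \<and> opnorm (cadj (Ps 0 \<omega>)) \<le> C"
    using P_opnorm_bounded by blast
  have "AE \<omega> in M. norm (cadj (Ps 0 \<omega>) ** Ps 0 \<omega>) \<le> real CARD('p) * real CARD('p) * (C * C)"
    using C
  proof eventually_elim
    case (elim \<omega>)
    have "opnorm (cadj (Ps 0 \<omega>) ** Ps 0 \<omega>) \<le> C * C"
      using elim \<open>0 \<le> C\<close> opnorm_nonneg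
      by (intro order_trans[OF opnorm_matrix_mult_le] mult_mono) auto
    then show ?case
      by (intro order_trans[OF norm_le_opnorm] mult_left_mono) auto
  qed
  then show ?thesis ..
qed

lemma integrable_gram: "integrable M (\<lambda>\<omega>. cadj (Ps 0 \<omega>) ** Ps 0 \<omega>)"
  using gram_bounded by (auto intro: integrable_const_bound)

lemma expectation_score: "expectation (\<lambda>\<omega>. score (sample 0 \<omega>)) = 0"
proof -
  have score_split: "score (sample 0 \<omega>) = (cadj (Ps 0 \<omega>) ** Ps 0 \<omega>) *v (Xs 0 \<omega> - \<mu>0)
      + cadj (Ps 0 \<omega>) *v Es 0 \<omega>" for \<omega>
    by (simp add: score_def matrix_vector_right_distrib matrix_vector_mul_assoc)
  have X_centered: "integrable M (\<lambda>\<omega>. Xs 0 \<omega> - \<mu>0)" "expectation (\<lambda>\<omega>. Xs 0 \<omega> - \<mu>0) = 0"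
    using integrable_X X_mean by (simp_all add: prob_space)
  have "indep_rv M (\<lambda>\<omega>. cadj (Ps 0 \<omega>) ** Ps 0 \<omega>) (\<lambda>\<omega>. Xs 0 \<omega> - \<mu>0)"
    using indep_rv_comp[OF indep_P_X, of "\<lambda>P. cadj P ** P" "\<lambda>x. x - \<mu>0"] by simp
  note first =
    integrable_matrix_vector_mult_indep[OF _ _ this integrable_gram X_centered(1), simplified]
    integral_matrix_vector_mult_indep[OF _ _ this integrable_gram X_centered(1), simplified]
  have "indep_rv M (\<lambda>\<omega>. cadj (Ps 0 \<omega>)) (Es 0)"
    using indep_rv_comp[OF indep_P_E, of cadj "\<lambda>e. e"] by simp
  note second =
    integrable_matrix_vector_mult_indep[OF _ _ this integrable_cadj_P integrable_E, simplified]
    integral_matrix_vector_mult_indep[OF _ _ this integrable_cadj_P integrable_E, simplified]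
  show ?thesis
    unfolding score_split Bochner_Integration.integral_add[OF first(1) second(1)]
    using first(2) second(2) X_centered(2) E_mean by simp
qed

lemma square_integrable_score: "integrable M (\<lambda>\<omega>. (norm (score (sample 0 \<omega>)))\<^sup>2)"
proof -
  obtain C where "0 \<le> C" and C: "AE \<omega> in M. opnorm (Ps 0 \<omega>) \<le> C \<and> opnorm (cadj (Ps 0 \<omega>)) \<le> C"
    using P_opnorm_bounded by blast
  let ?a = "\<lambda>\<omega>. norm (Xs 0 \<omega> - \<mu>0)" and ?b = "\<lambda>\<omega>. norm (Es 0 \<omega>)"
  show ?thesis
  proof (rule Bochner_Integration.integrable_bound)
    show "integrable M (\<lambda>\<omega>. 2 * C\<^sup>2 * (C\<^sup>2 * (?a \<omega>)\<^sup>2 + (?b \<omega>)\<^sup>2))"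
      using X_square_integrable E_square_integrable by simp
    show "AE \<omega> in M. norm ((norm (score (sample 0 \<omega>)))\<^sup>2)
        \<le> norm (2 * C\<^sup>2 * (C\<^sup>2 * (?a \<omega>)\<^sup>2 + (?b \<omega>)\<^sup>2))"
      using C
    proof eventually_elim
      case (elim \<omega>)
      have "norm (score (sample 0 \<omega>))
          \<le> opnorm (cadj (Ps 0 \<omega>)) * (opnorm (Ps 0 \<omega>) * ?a \<omega> + ?b \<omega>)"
        unfolding score_def by (simp add: norm_cadj_mult_le)
      also have "\<dots> \<le> C * (C * ?a \<omega> + ?b \<omega>)"
        using elim \<open>0 \<le> C\<close>
        by (intro mult_mono add_right_mono mult_right_mono)
          (auto intro!: add_nonneg_nonneg mult_nonneg_nonneg opnorm_nonneg)
      finally have "(norm (score (sample 0 \<omega>)))\<^sup>2 \<le> C\<^sup>2 * (C * ?a \<omega> + ?b \<omega>)\<^sup>2"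
        by (metis norm_ge_zero power_mono power_mult_distrib)
      also have "\<dots> \<le> C\<^sup>2 * (2 * (C\<^sup>2 * (?a \<omega>)\<^sup>2 + (?b \<omega>)\<^sup>2))"
        using zero_le_power2[of "C * ?a \<omega> - ?b \<omega>"]
        by (intro mult_left_mono) (simp_all add: power2_eq_square algebra_simps)
      finally show ?case
        by (simp add: algebra_simps)
    qed
  qed simp
qed

lemma square_integrable_gram_deviation:
  "integrable M (\<lambda>\<omega>. (norm (gram_deviation (sample 0 \<omega>)))\<^sup>2)"
proof -
  obtain B where B: "AE \<omega> in M. norm (cadj (Ps 0 \<omega>) ** Ps 0 \<omega>) \<le> B"
    using gram_bounded by blast
  have "AE \<omega> in M. norm ((norm (gram_deviation (sample 0 \<omega>)))\<^sup>2) \<le> (B + norm A)\<^sup>2"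
    using B
  proof eventually_elim
    case (elim \<omega>)
    have "norm (gram_deviation (sample 0 \<omega>)) \<le> B + norm A"
      using norm_triangle_ineq4[of "cadj (Ps 0 \<omega>) ** Ps 0 \<omega>" A] elim
      by (simp add: gram_deviation_def)
    then show ?case
      by (simp add: power_mono)
  qed
  then show ?thesis
    by (rule integrable_const_bound) simp
qed

lemma expectation_gram_deviation: "expectation (\<lambda>\<omega>. gram_deviation (sample 0 \<omega>)) = 0"
  by (simp add: gram_deviation_def integrable_gram prob_space)

lemma
  fixes h :: "('p, 'q) observation \<Rightarrow> 'b::euclidean_space"
  assumes [measurable]: "h \<in> borel_measurable borel"
    and square_integrable: "integrable M (\<lambda>\<omega>. (norm (h (sample 0 \<omega>)))\<^sup>2)"
    and mean_zero: "expectation (\<lambda>\<omega>. h (sample 0 \<omega>)) = 0"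
  shows integrable_norm_sum_square_iid: "integrable M (\<lambda>\<omega>. (norm (\<Sum>s<n. h (sample s \<omega>)))\<^sup>2)"
    and expectation_norm_sum_square_iid: "expectation (\<lambda>\<omega>. (norm (\<Sum>s<n. h (sample s \<omega>)))\<^sup>2)
      = real n * expectation (\<lambda>\<omega>. (norm (h (sample 0 \<omega>)))\<^sup>2)"
proof -
  have indep: "indep_vars (\<lambda>_. borel) (\<lambda>s \<omega>. h (sample s \<omega>)) UNIV"
    by (rule indep_vars_compose2[OF indep_samples]) simp
  note same_law = integrable_comp_distr_eq[OF ident_distr_samples]
    integral_comp_distr_eq[OF ident_distr_samples]
  have square_integrable_s: "integrable M (\<lambda>\<omega>. (norm (h (sample s \<omega>)))\<^sup>2)" for s
    using same_law(1)[of s "\<lambda>t. (norm (h t))\<^sup>2"] square_integrable by simp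
  have mean_zero_s: "expectation (\<lambda>\<omega>. h (sample s \<omega>)) = 0" for s
    using same_law(2)[of s h] mean_zero by simp
  have second_moment_s: "expectation (\<lambda>\<omega>. (norm (h (sample s \<omega>)))\<^sup>2)
      = expectation (\<lambda>\<omega>. (norm (h (sample 0 \<omega>)))\<^sup>2)" for s
    using same_law(2)[of s "\<lambda>t. (norm (h t))\<^sup>2"] by simp
  show "integrable M (\<lambda>\<omega>. (norm (\<Sum>s<n. h (sample s \<omega>)))\<^sup>2)"
    by (rule integrable_norm_sum_square_indep[OF indep square_integrable_s mean_zero_s])
  have "expectation (\<lambda>\<omega>. (norm (\<Sum>s<n. h (sample s \<omega>)))\<^sup>2)
      = (\<Sum>s<n. expectation (\<lambda>\<omega>. (norm (h (sample s \<omega>)))\<^sup>2))"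
    by (rule expectation_norm_sum_square_indep[OF indep square_integrable_s mean_zero_s])
  also have "\<dots> = (\<Sum>s<n. expectation (\<lambda>\<omega>. (norm (h (sample 0 \<omega>)))\<^sup>2))"
    by (rule sum.cong[OF refl second_moment_s])
  finally show "expectation (\<lambda>\<omega>. (norm (\<Sum>s<n. h (sample s \<omega>)))\<^sup>2)
      = real n * expectation (\<lambda>\<omega>. (norm (h (sample 0 \<omega>)))\<^sup>2)"
    by simp
qed

abbreviation "\<kappa> \<equiv> opnorm (matrix_inv A)"

lemma estimator_error_le:
  assumes "0 < n"
  shows "norm (estimator n \<omega> - \<mu>0)
    \<le> \<kappa> / sqrt n + \<kappa> / (n * sqrt n) * (norm (\<Sum>s<n. score (sample s \<omega>)))\<^sup>2
       + 4 * \<kappa>\<^sup>2 * (real CARD('p) * real CARD('p))\<^sup>2 * norm \<mu>0 / (real n)\<^sup>2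
         * (norm (\<Sum>s<n. gram_deviation (sample s \<omega>)))\<^sup>2"
proof -
  let ?x = "norm (\<Sum>s<n. score (sample s \<omega>))"
  let ?y = "norm (\<Sum>s<n. gram_deviation (sample s \<omega>))"
  have gram: "A_n Ps n \<omega> - A = (1 / real n) *\<^sub>R (\<Sum>s<n. gram_deviation (sample s \<omega>))"
    using A_n_diff[OF assms] by (simp add: gram_deviation_def)
  have score: "b_n Ps (\<lambda>s \<omega>. Ps s \<omega> *v Xs s \<omega> + Es s \<omega>) n \<omega> - A_n Ps n \<omega> *v \<mu>0
      = (1 / real n) *\<^sub>R (\<Sum>s<n. score (sample s \<omega>))"
    using b_n_diff by (simp add: score_def)
  have "norm (estimator n \<omega> - \<mu>0)
      \<le> 2 * \<kappa> * (?x / n) + 4 * \<kappa>\<^sup>2 * (real CARD('p) * real CARD('p))\<^sup>2 * norm \<mu>0 * (?y / n)\<^sup>2"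
    using norm_guarded_solve_diff_le[OF A_invertible, of "A_n Ps n \<omega>"
        "b_n Ps (\<lambda>s \<omega>. Ps s \<omega> *v Xs s \<omega> + Es s \<omega>) n \<omega>" \<mu>0]
    unfolding mu_n_eq_guarded_solve gram score by simp
  \<comment> \<open>AM-GM trades the first moment of the score sum for its second moment.\<close>
  moreover have "\<kappa> * (2 * ?x / n) \<le> \<kappa> * (1 / sqrt n + ?x\<^sup>2 / (n * sqrt n))"
    using double_div_le_inverse_sqrt[of n ?x] assms by (intro mult_left_mono opnorm_nonneg) simp
  ultimately show ?thesis
    by (simp add: field_simps power2_eq_square)
qed

lemma measurable_estimator [measurable]: "(\<lambda>\<omega>. estimator n \<omega>) \<in> borel_measurable M"
  unfolding mu_n_eq_guarded_solve A_n_def b_n_def by measurable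

lemma expected_error_rate:
  "\<exists>C. \<forall>n>0. integrable M (\<lambda>\<omega>. norm (estimator n \<omega> - \<mu>0))
              \<and> expectation (\<lambda>\<omega>. norm (estimator n \<omega> - \<mu>0)) \<le> C / sqrt n"
proof -
  define L where "L = 4 * \<kappa>\<^sup>2 * (real CARD('p) * real CARD('p))\<^sup>2 * norm \<mu>0"
  define VB where "VB = expectation (\<lambda>\<omega>. (norm (score (sample 0 \<omega>)))\<^sup>2)"
  define VA where "VA = expectation (\<lambda>\<omega>. (norm (gram_deviation (sample 0 \<omega>)))\<^sup>2)"
  define G where "G n \<omega> = \<kappa> / sqrt n + \<kappa> / (n * sqrt n) * (norm (\<Sum>s<n. score (sample s \<omega>)))\<^sup>2
      + L / (real n)\<^sup>2 * (norm (\<Sum>s<n. gram_deviation (sample s \<omega>)))\<^sup>2" for n \<omega>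
  note score_moments =
    integrable_norm_sum_square_iid[OF measurable_score square_integrable_score expectation_score]
    expectation_norm_sum_square_iid[OF measurable_score square_integrable_score expectation_score]
  note gram_moments =
    integrable_norm_sum_square_iid[OF measurable_gram_deviation square_integrable_gram_deviation
      expectation_gram_deviation]
    expectation_norm_sum_square_iid[OF measurable_gram_deviation square_integrable_gram_deviation
      expectation_gram_deviation]
  have L: "0 \<le> L" and VA: "0 \<le> VA"
    by (simp_all add: L_def VA_def)
  have G_integrable: "integrable M (G n)" for n
    unfolding G_def by (intro Bochner_Integration.integrable_add integrable_mult_right score_moments
        gram_moments integrable_const)
  have error_le_G: "norm (estimator n \<omega> - \<mu>0) \<le> G n \<omega>" if "0 < n" for n \<omega>
    using estimator_error_le[OF that] by (simp add: G_def L_def)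
  have G_expectation: "expectation (G n) \<le> (\<kappa> + \<kappa> * VB + L * VA) / sqrt n" if "0 < n" for n
  proof -
    have "expectation (G n)
        = \<kappa> / sqrt n + \<kappa> / (n * sqrt n) * (n * VB) + L / (real n)\<^sup>2 * (n * VA)"
      unfolding G_def VA_def VB_def
      by (simp add: Bochner_Integration.integrable_add score_moments gram_moments prob_space)
    also have "\<dots> = \<kappa> / sqrt n + \<kappa> * VB / sqrt n + L * VA / n"
      using that by (simp add: power2_eq_square)
    also have "L * VA / n \<le> L * VA / sqrt n"
    proof (rule divide_left_mono)
      show "sqrt n \<le> n"
        using real_sqrt_le_mono[of n "n * n"] that by simp
    qed (use that L VA in auto)
    finally show ?thesis
      by (simp add: add_divide_distrib)
  qed
  have error_integrable: "integrable M (\<lambda>\<omega>. norm (estimator n \<omega> - \<mu>0))" if "0 < n" for n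
    using error_le_G[OF that]
    by (intro Bochner_Integration.integrable_bound[OF G_integrable[of n]] AE_I2)
      (auto intro: order_trans abs_ge_self)
  have "expectation (\<lambda>\<omega>. norm (estimator n \<omega> - \<mu>0)) \<le> expectation (G n)" if "0 < n" for n
    using error_le_G[OF that] by (intro integral_mono G_integrable error_integrable[OF that])
  then show ?thesis
    using error_integrable G_expectation by (meson order_trans)
qed

lemma integrable_error: "integrable M (\<lambda>\<omega>. norm (estimator n \<omega> - \<mu>0))"
proof (cases "n = 0")
  case True
  then show ?thesis
    by (simp add: mu_n_eq_guarded_solve A_n_def b_n_def)
next
  case False
  then show ?thesis
    using expected_error_rate by blast
qed

end

theorem proposition2p1:
  fixes M :: "'w measure"
    and Xs :: "nat \<Rightarrow> 'w \<Rightarrow> complex^'p"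
    and Ps :: "nat \<Rightarrow> 'w \<Rightarrow> complex^'p^'q"
    and Es :: "nat \<Rightarrow> 'w \<Rightarrow> complex^'q"
    and \<mu>0 :: "complex^'p" and \<sigma>2 :: real and BP :: real
  assumes prob: "prob_space M"
    and meas: "\<And>s. Xs s \<in> borel_measurable M" "\<And>s. Ps s \<in> borel_measurable M"
              "\<And>s. Es s \<in> borel_measurable M"
    and iid_indep: "prob_space.indep_vars M (\<lambda>_. borel) (\<lambda>s \<omega>. (Xs s \<omega>, Ps s \<omega>, Es s \<omega>)) UNIV"
    and iid_dist: "\<And>s. distr M borel (\<lambda>\<omega>. (Xs s \<omega>, Ps s \<omega>, Es s \<omega>))
                       = distr M borel (\<lambda>\<omega>. (Xs 0 \<omega>, Ps 0 \<omega>, Es 0 \<omega>))"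
    and indep_XPE: "\<And>A B C. A \<in> sets borel \<Longrightarrow> B \<in> sets borel \<Longrightarrow> C \<in> sets borel \<Longrightarrow>
        measure M {\<omega> \<in> space M. Xs 0 \<omega> \<in> A \<and> Ps 0 \<omega> \<in> B \<and> Es 0 \<omega> \<in> C}
        = measure M {\<omega> \<in> space M. Xs 0 \<omega> \<in> A} * measure M {\<omega> \<in> space M. Ps 0 \<omega> \<in> B}
          * measure M {\<omega> \<in> space M. Es 0 \<omega> \<in> C}"
    and X_int: "integrable M (Xs 0)" and X_mean: "integral\<^sup>L M (Xs 0) = \<mu>0"
    and X_L2: "integrable M (\<lambda>\<omega>. (norm (Xs 0 \<omega> - \<mu>0))\<^sup>2)"
    and E_int: "integrable M (Es 0)" and E_mean: "integral\<^sup>L M (Es 0) = 0"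
    and E_L2: "integrable M (\<lambda>\<omega>. (norm (Es 0 \<omega>))\<^sup>2)"
    and E_cov: "\<And>i j. integral\<^sup>L M (\<lambda>\<omega>. Es 0 \<omega> $ i * cnj (Es 0 \<omega> $ j))
                      = (if i = j then complex_of_real \<sigma>2 else 0)"
    and A_inv: "invertible (integral\<^sup>L M (\<lambda>\<omega>. cadj (Ps 0 \<omega>) ** Ps 0 \<omega>))"
    and P_bdd: "AE \<omega> in M. opnorm (Ps 0 \<omega>) \<le> BP"
  shows "(\<forall>n. integrable M (\<lambda>\<omega>. norm (mu_n (integral\<^sup>L M (\<lambda>\<omega>. cadj (Ps 0 \<omega>) ** Ps 0 \<omega>)) Ps
                 (\<lambda>s \<omega>. Ps s \<omega> *v Xs s \<omega> + Es s \<omega>) n \<omega> - \<mu>0)))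
       \<and> (\<lambda>n. integral\<^sup>L M (\<lambda>\<omega>. norm (mu_n (integral\<^sup>L M (\<lambda>\<omega>. cadj (Ps 0 \<omega>) ** Ps 0 \<omega>)) Ps
                 (\<lambda>s \<omega>. Ps s \<omega> *v Xs s \<omega> + Es s \<omega>) n \<omega> - \<mu>0)))
           \<in> O(\<lambda>n. 1 / sqrt (real n))
       \<and> (\<forall>\<epsilon>>0. (\<lambda>n. measure M {\<omega> \<in> space M. norm (mu_n (integral\<^sup>L M (\<lambda>\<omega>. cadj (Ps 0 \<omega>) ** Ps 0 \<omega>)) Ps
                 (\<lambda>s \<omega>. Ps s \<omega> *v Xs s \<omega> + Es s \<omega>) n \<omega> - \<mu>0) > \<epsilon>}) \<longlonglongrightarrow> 0)"
proof -
  interpret prob_space M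
    by (rule prob)
  have indep_P_X: "indep_rv M (Ps 0) (Xs 0)"
    using indep_XPE by (rule indep_rv_of_product3(1))
  have indep_P_E: "indep_rv M (Ps 0) (Es 0)"
    using indep_XPE by (rule indep_rv_of_product3(2))
  interpret model: linear_inverse_model M Xs Ps Es \<mu>0 BP
    by unfold_locales
      (fact meas iid_indep iid_dist indep_P_X indep_P_E X_mean X_L2 E_mean E_L2 P_bdd A_inv)+
  let ?E = "\<lambda>n. expectation (\<lambda>\<omega>. norm (model.estimator n \<omega> - \<mu>0))"
  obtain C where "\<forall>n>0. integrable M (\<lambda>\<omega>. norm (model.estimator n \<omega> - \<mu>0)) \<and> ?E n \<le> C / sqrt n"
    using model.expected_error_rate by blast
  then have "\<bar>?E n\<bar> \<le> C / sqrt n" if "0 < n" for n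
    using that by simp
  note rate = bigo_inverse_sqrt_if_le[OF this] tendsto_zero_if_le_inverse_sqrt[OF this]
  have "(\<lambda>n. prob {\<omega> \<in> space M. \<epsilon> < norm (model.estimator n \<omega> - \<mu>0)}) \<longlonglongrightarrow> 0"
    if "0 < \<epsilon>" for \<epsilon>
    by (rule prob_greater_tendsto_zero[OF model.integrable_error _ rate(2) that]) simp
  then show ?thesis
    using model.integrable_error rate(1) by blast
qed

end
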